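(* Consider the algorithm described in the context, applied to $\psi=f+\varphi$ where $\nabla f$ is locally Lipschitz continuous, and assume the generated iterates $\{x^k\}$ are bounded. Then the following accuracy condition (B.3) holds: for every subsequence $\{k_\ell\}$ such that $\{x^{k_\ell}\}$ converges and $\alpha_{k_\ell}\to0$, $$\psi(x^{k_\ell}+\alpha_{k_\ell}\bar s^{k_\ell})-\psi(x^{k_\ell})-\alpha_{k_\ell}\psi'(x^{k_\ell};\bar s^{k_\ell})=o(\alpha_{k_\ell})\quad(\ell\to\infty),$$ in each of the following cases: (i) $\varphi$ is polyhedral (a pointwise maximum of finitely many affine functions) and the safeguard satisfies $\Gamma(x,d)\le\Gamma_{\max}(x,d)$; (ii) (group lasso) the variable is $X=(X_1,\dots,X_{n_2})\in\mathbb{R}^{n_1\times n_2}$, $\varphi(X)=\sum_{i=1}^{n_2}\|X_i\|$, and for $D=(D_1,\dots,D_{n_2})$ with $\|D\|=1$ (Frobenius norm) the safeguard is $$\Gamma(X,D)=\min\Big\{\Gamma_{\max}(X,D),\ \min_{X_i\ne0}\frac{\|X_i\|^{1+\sigma}}{1-\theta_i^2},\ \min_{X_i\ne0}\frac{\|X_i\|}{\max\{-2\theta_i,0\}}\Big\}$$ for a fixed $\sigma>0$, where $\theta_i=\langle X_i,D_i\rangle/(\|X_i\|\,\|D_i\|)$ and $c/0:=+\infty$ for $c>0$.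
   Context: Problem: minimize $\psi=f+\varphi$ where $f$ is continuously differentiable and $\varphi$ is real-valued convex. Notation: $\|\cdot\|$ Euclidean (Frobenius for matrices) norm, $B_r(x)$ open ball, $\bar v=v/\|v\|$, $\psi'(x;d)$ directional derivative, $\partial\psi(x)=\nabla f(x)+\partial\varphi(x)$; $x$ is stationary if $0\in\partial\psi(x)$. Pseudo-gradient: $g(x)=u(x)d(x)$ where, for non-stationary $x$, $\|d(x)\|=1$, $\psi'(x;d(x))<0$, $u(x)\in[\psi'(x;d(x)),0)$, and for stationary $x$, $d(x)=0$, $u(x)=0$. Safeguards: for $\|d\|=1$, $\Gamma_{\max}(x,d)=\sup\{T>0: t\mapsto\psi(x+td)\text{ is } C^1\text{ on }(0,T)\}$, $\Gamma(x)=\inf_{\|d\|=1}\Gamma_{\max}(x,d)$; a stepsize safeguard $(x,d)\mapsto\Gamma(x,d)\in(0,\infty]$ is fixed. Truncation: $\psi$ can be truncated with data $\mathbb{R}^n=S_0\supset\cdots\supset S_m$, $\delta\in(0,\infty]$, $\kappa>0$, $T:\mathbb{R}^n\times(0,\delta]\to\mathbb{R}^n$ meaning (i) $\Gamma(x)\ge\delta$ on $S_m$; (ii) for $a\in(0,\delta]$, $x\in S_i\setminus S_{i+1}$, $i<m$: if $\Gamma(x)\ge a$ then $T(x,a)=x$, else $T(x,a)\in S_{i+1}$, $\Gamma(T(x,a))\ge a$, $\|T(x,a)-x\|\le\kappa a$. Put $S_{m+1}=\emptyset$. Algorithm: parameters $0<\eta<\eta_1<\eta_2<1$, $0<r_1<1<r_2$,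 $\Delta_{\max}>0$, $\gamma_1,\gamma_2>0$, a positive strictly decreasing summable sequence $(\epsilon_s)$ with $\epsilon_s\le\delta$, a nonincreasing $\ell:(0,\infty)\to[0,\frac12]$ with $\ell(\Delta)\to0$ as $\Delta\to0^+$; start $x^0$, $\Delta_0>0$, counters $c_0=\dots=c_m=0$. Iteration $k$: $g^k=g(x^k)$; stop if $g^k=0$. Choose $B^k\in\mathbb{R}^{n\times n}$, model $m_k(s)=\psi(x^k)+\langle g^k,s\rangle+\frac12\langle s,B^ks\rangle$, Cauchy point $s^k_C=-\alpha^C_kg^k$ with $\alpha^C_k\in\arg\min_{0\le t\le\Delta_k/\|g^k\|}m_k(-tg^k)$. Choose $s^k$, $\|s^k\|\le\Delta_k$, with $m_k(0)-m_k(s^k)\ge\frac{\gamma_1}{2}\|g^k\|\min\{\Delta_k,\gamma_2\|g^k\|\}$ and $m_k(0)-m_k(s^k)\ge(1-\ell(\|s^k\|))(m_k(0)-m_k(s^k_C))$. Let $\rho^1_k=\frac{\psi(x^k)-\psi(x^k+s^k)}{m_k(0)-m_k(s^k)}$. If $\rho^1_k\ge\eta_1$: $\tilde x^k=x^k+s^k$, $\Delta_{k+1}=\min\{\Delta_{\max},r_2\Delta_k\}$ if $\rho^1_k>\eta_2$ and $\Delta_{k+1}=\Delta_k$ otherwise. Stepsize computation (performed for the analysis in every iteration, used by the algorithm when $\rho^1_k<\eta_1$): $\alpha_k=\min\{\Gamma(x^k,\bar s^k),\|s^k\|\}$; if $m_k(0)-m_k(\alpha_k\bar s^k)<\frac{\alpha_k}{2\|s^k\|}(m_k(0)-m_k(s^k))$,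 replace $s^k$ by $s^k_C$ (so $\bar s^k=\bar s^k_C$) and $\alpha_k=\min\{\Gamma(x^k,\bar s^k_C),\|s^k_C\|\}$; $\rho^2_k=\frac{\psi(x^k)-\psi(x^k+\alpha_k\bar s^k)}{m_k(0)-m_k(\alpha_k\bar s^k)}$. If $\rho^1_k<\eta_1$: $\Delta_{k+1}=r_1\Delta_k$ if $\rho^2_k<\eta_1$, $=\min\{\Delta_{\max},r_2\Delta_k\}$ if $\rho^2_k>\eta_2$, $=\Delta_k$ otherwise; $\tilde x^k=x^k+\alpha_k\bar s^k$ if $\rho^2_k\ge\eta$ and $\tilde x^k=x^k$ otherwise. Truncation step: set $\tilde x=\tilde x^k$ and repeat {find $i$ with $\tilde x\in S_i\setminus S_{i+1}$; if $\Gamma(\tilde x)<\epsilon_{c_i}$ set $\tilde x\leftarrow T(\tilde x,\epsilon_{c_i})$, $c_i\leftarrow c_i+1$; else stop}; $x^{k+1}=\tilde x$. Here $\alpha_k,\bar s^k$ denote the quantities of the stepsize computation. *)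

theory Defs
  imports "HOL-Analysis.Analysis" "HOL-Library.Landau_Symbols"
begin

definition dirderiv :: "('a::real_normed_vector \<Rightarrow> real) \<Rightarrow> 'a \<Rightarrow> 'a \<Rightarrow> real" where
  "dirderiv psi x d = Lim (at_right 0) (\<lambda>t::real. (psi (x + t *\<^sub>R d) - psi x) / t)"

definition subdiff :: "('a::real_inner \<Rightarrow> real) \<Rightarrow> 'a \<Rightarrow> 'a set" where
  "subdiff phi x = {v. \<forall>y. phi y \<ge> phi x + inner v (y - x)}"

definition stationary :: "('a::real_inner \<Rightarrow> 'a) \<Rightarrow> ('a \<Rightarrow> real) \<Rightarrow> 'a \<Rightarrow> bool" where
  "stationary G phi x \<longleftrightarrow> 0 \<in> {G x + v | v. v \<in> subdiff phi x}"

definition C1_grad :: "('a::real_inner \<Rightarrow> real) \<Rightarrow> ('a \<Rightarrow> 'a) \<Rightarrow> bool" where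
  "C1_grad f G \<longleftrightarrow> (\<forall>x. (f has_derivative (\<lambda>h. inner (G x) h)) (at x)) \<and> continuous_on UNIV G"

definition locally_lipschitz :: "('a::metric_space \<Rightarrow> 'b::metric_space) \<Rightarrow> bool" where
  "locally_lipschitz G \<longleftrightarrow>
     (\<forall>x. \<exists>r>0. \<exists>L. \<forall>y\<in>ball x r. \<forall>z\<in>ball x r. dist (G y) (G z) \<le> L * dist y z)"

text \<open>Pseudo-gradient g(x) = u(x) d(x).\<close>
definition pseudo_gradient ::
  "('a::real_inner \<Rightarrow> real) \<Rightarrow> ('a \<Rightarrow> 'a) \<Rightarrow> ('a \<Rightarrow> real) \<Rightarrow> ('a \<Rightarrow> real) \<Rightarrow> ('a \<Rightarrow> 'a) \<Rightarrow> bool" where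
  "pseudo_gradient psi G phi u d \<longleftrightarrow>
     (\<forall>x. \<not> stationary G phi x \<longrightarrow>
          norm (d x) = 1 \<and> dirderiv psi x (d x) < 0 \<and>
          dirderiv psi x (d x) \<le> u x \<and> u x < 0) \<and>
     (\<forall>x. stationary G phi x \<longrightarrow> d x = 0 \<and> u x = 0)"

definition C1_on_interval :: "(real \<Rightarrow> real) \<Rightarrow> real \<Rightarrow> bool" where
  "C1_on_interval h T \<longleftrightarrow>
     (\<exists>h'. (\<forall>t\<in>{0<..<T}. (h has_real_derivative h' t) (at t)) \<and> continuous_on {0<..<T} h')"

definition Gmax :: "('a::real_normed_vector \<Rightarrow> real) \<Rightarrow> 'a \<Rightarrow> 'a \<Rightarrow> ereal" where
  "Gmax psi x d = Sup (ereal ` {T. T > 0 \<and> C1_on_interval (\<lambda>t. psi (x + t *\<^sub>R d)) T})"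

definition Gpt :: "('a::real_normed_vector \<Rightarrow> real) \<Rightarrow> 'a \<Rightarrow> ereal" where
  "Gpt psi x = (INF d\<in>{d. norm d = 1}. Gmax psi x d)"

text \<open>x lies in S_i minus S_(i+1), with the convention S_(m+1) = empty.\<close>
definition in_level :: "(nat \<Rightarrow> 'a set) \<Rightarrow> nat \<Rightarrow> nat \<Rightarrow> 'a \<Rightarrow> bool" where
  "in_level S m i x \<longleftrightarrow> i \<le> m \<and> x \<in> S i \<and> (i < m \<longrightarrow> x \<notin> S (Suc i))"

definition truncation_data ::
  "('a::real_normed_vector \<Rightarrow> real) \<Rightarrow> (nat \<Rightarrow> 'a set) \<Rightarrow> nat \<Rightarrow> ereal \<Rightarrow> real
   \<Rightarrow> ('a \<Rightarrow> real \<Rightarrow> 'a) \<Rightarrow> bool" where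
  "truncation_data psi S m \<delta> \<kappa> T \<longleftrightarrow>
     S 0 = UNIV \<and> (\<forall>i<m. S (Suc i) \<subseteq> S i) \<and> 0 < \<delta> \<and> \<kappa> > 0 \<and>
     (\<forall>x\<in>S m. Gpt psi x \<ge> \<delta>) \<and>
     (\<forall>a. 0 < a \<and> ereal a \<le> \<delta> \<longrightarrow>
        (\<forall>i<m. \<forall>x. x \<in> S i \<and> x \<notin> S (Suc i) \<longrightarrow>
           (if Gpt psi x \<ge> ereal a then T x a = x
            else T x a \<in> S (Suc i) \<and> Gpt psi (T x a) \<ge> ereal a \<and> norm (T x a - x) \<le> \<kappa> * a)))"

inductive trunc_loop ::
  "('a::real_normed_vector \<Rightarrow> real) \<Rightarrow> (nat \<Rightarrow> 'a set) \<Rightarrow> nat \<Rightarrow> ('a \<Rightarrow> real \<Rightarrow> 'a)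
   \<Rightarrow> (nat \<Rightarrow> real) \<Rightarrow> 'a \<times> (nat \<Rightarrow> nat) \<Rightarrow> 'a \<times> (nat \<Rightarrow> nat) \<Rightarrow> bool"
  for psi S m T eps where
  stop: "in_level S m i x \<Longrightarrow> \<not> (Gpt psi x < ereal (eps (c i)))
         \<Longrightarrow> trunc_loop psi S m T eps (x, c) (x, c)"
| step: "in_level S m i x \<Longrightarrow> Gpt psi x < ereal (eps (c i))
         \<Longrightarrow> trunc_loop psi S m T eps (T x (eps (c i)), c(i := Suc (c i))) r
         \<Longrightarrow> trunc_loop psi S m T eps (x, c) r"

definition emin :: "ereal \<Rightarrow> real \<Rightarrow> real" where
  "emin G r = real_of_ereal (min G (ereal r))"

definition unitv :: "'a::real_normed_vector \<Rightarrow> 'a" where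
  "unitv v = v /\<^sub>R norm v"

definition model :: "real \<Rightarrow> 'a::real_inner \<Rightarrow> ('a \<Rightarrow> 'a) \<Rightarrow> 'a \<Rightarrow> real" where
  "model p0 g B s = p0 + inner g s + 1/2 * inner s (B s)"

definition alg_params ::
  "real \<Rightarrow> real \<Rightarrow> real \<Rightarrow> real \<Rightarrow> real \<Rightarrow> real \<Rightarrow> real \<Rightarrow> real
   \<Rightarrow> (nat \<Rightarrow> real) \<Rightarrow> (real \<Rightarrow> real) \<Rightarrow> ereal \<Rightarrow> bool" where
  "alg_params \<eta> \<eta>1 \<eta>2 r1 r2 \<Delta>max \<gamma>1 \<gamma>2 eps ell \<delta> \<longleftrightarrow>
     0 < \<eta> \<and> \<eta> < \<eta>1 \<and> \<eta>1 < \<eta>2 \<and> \<eta>2 < 1 \<and> 0 < r1 \<and> r1 < 1 \<and> 1 < r2 \<and>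
     \<Delta>max > 0 \<and> \<gamma>1 > 0 \<and> \<gamma>2 > 0 \<and>
     (\<forall>s. eps s > 0) \<and> (\<forall>s. eps (Suc s) < eps s) \<and> summable eps \<and>
     (\<forall>s. ereal (eps s) \<le> \<delta>) \<and>
     (\<forall>a b. 0 < a \<and> a \<le> b \<longrightarrow> ell b \<le> ell a) \<and>
     (\<forall>a>0. 0 \<le> ell a \<and> ell a \<le> 1/2) \<and> (ell \<longlongrightarrow> 0) (at_right 0)"

text \<open>A run of the algorithm that never stops (g(x^k) \<noteq> 0 for all k).
  x: iterates, Dl: radii, B: model operators, s: trial steps chosen in Step 2,
  aC: Cauchy stepsizes, c: counter vectors at the beginning of iteration k,
  al, sb: alpha_k and bar s^k from the stepsize computation.\<close>
definition TR_run ::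
  "('a::euclidean_space \<Rightarrow> real) \<Rightarrow> ('a \<Rightarrow> 'a) \<Rightarrow> ('a \<Rightarrow> real)
   \<Rightarrow> ('a \<Rightarrow> real) \<Rightarrow> ('a \<Rightarrow> 'a) \<Rightarrow> ('a \<Rightarrow> 'a \<Rightarrow> ereal)
   \<Rightarrow> (nat \<Rightarrow> 'a set) \<Rightarrow> nat \<Rightarrow> ereal \<Rightarrow> real \<Rightarrow> ('a \<Rightarrow> real \<Rightarrow> 'a)
   \<Rightarrow> real \<Rightarrow> real \<Rightarrow> real \<Rightarrow> real \<Rightarrow> real \<Rightarrow> real \<Rightarrow> real \<Rightarrow> real
   \<Rightarrow> (nat \<Rightarrow> real) \<Rightarrow> (real \<Rightarrow> real)
   \<Rightarrow> (nat \<Rightarrow> 'a) \<Rightarrow> (nat \<Rightarrow> real) \<Rightarrow> (nat \<Rightarrow> 'a \<Rightarrow> 'a) \<Rightarrow> (nat \<Rightarrow> 'a) \<Rightarrow> (nat \<Rightarrow> real)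
   \<Rightarrow> (nat \<Rightarrow> nat \<Rightarrow> nat) \<Rightarrow> (nat \<Rightarrow> real) \<Rightarrow> (nat \<Rightarrow> 'a) \<Rightarrow> bool" where
  "TR_run f G phi u d Gam S m \<delta> \<kappa> T \<eta> \<eta>1 \<eta>2 r1 r2 \<Delta>max \<gamma>1 \<gamma>2 eps ell
          x Dl B s aC c al sb \<longleftrightarrow>
   (let psi = (\<lambda>y. f y + phi y) in
     C1_grad f G \<and> convex_on UNIV phi \<and>
     pseudo_gradient psi G phi u d \<and>
     (\<forall>y e. norm e = 1 \<longrightarrow> Gam y e > 0) \<and>
     truncation_data psi S m \<delta> \<kappa> T \<and>
     alg_params \<eta> \<eta>1 \<eta>2 r1 r2 \<Delta>max \<gamma>1 \<gamma>2 eps ell \<delta> \<and>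
     Dl 0 > 0 \<and> c 0 = (\<lambda>i. 0) \<and>
     (\<forall>k. let g = u (x k) *\<^sub>R d (x k);
              mk = model (psi (x k)) g (B k);
              sC = - (aC k) *\<^sub>R g;
              pred = mk 0 - mk (s k);
              rho1 = (psi (x k) - psi (x k + s k)) / pred;
              a1 = emin (Gam (x k) (unitv (s k))) (norm (s k));
              rho2 = (psi (x k) - psi (x k + al k *\<^sub>R sb k)) / (mk 0 - mk (al k *\<^sub>R sb k));
              Dnext = Dl (Suc k);
              xt = (if rho1 \<ge> \<eta>1 then x k + s k
                    else if rho2 \<ge> \<eta> then x k + al k *\<^sub>R sb k else x k)
          in g \<noteq> 0 \<and>
             linear (B k) \<and>
             0 \<le> aC k \<and> aC k \<le> Dl k / norm g \<and>
             (\<forall>t. 0 \<le> t \<and> t \<le> Dl k / norm g \<longrightarrow> mk sC \<le> mk (- t *\<^sub>R g)) \<and>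
             norm (s k) \<le> Dl k \<and>
             pred \<ge> \<gamma>1 / 2 * norm g * min (Dl k) (\<gamma>2 * norm g) \<and>
             pred \<ge> (1 - ell (norm (s k))) * (mk 0 - mk sC) \<and>
             (if mk 0 - mk (a1 *\<^sub>R unitv (s k)) < a1 / (2 * norm (s k)) * pred
              then sb k = unitv sC \<and> al k = emin (Gam (x k) (unitv sC)) (norm sC)
              else sb k = unitv (s k) \<and> al k = a1) \<and>
             (if rho1 \<ge> \<eta>1 then
                Dnext = (if rho1 > \<eta>2 then min \<Delta>max (r2 * Dl k) else Dl k)
              else
                Dnext = (if rho2 < \<eta>1 then r1 * Dl k
                         else if rho2 > \<eta>2 then min \<Delta>max (r2 * Dl k) else Dl k)) \<and>
             trunc_loop psi S m T eps (xt, c k) (x (Suc k), c (Suc k))))"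

definition accuracy_B3 ::
  "('a::real_normed_vector \<Rightarrow> real) \<Rightarrow> (nat \<Rightarrow> 'a) \<Rightarrow> (nat \<Rightarrow> real) \<Rightarrow> (nat \<Rightarrow> 'a) \<Rightarrow> bool" where
  "accuracy_B3 psi x al sb \<longleftrightarrow>
     (\<forall>r::nat \<Rightarrow> nat. strict_mono r \<and> convergent (\<lambda>l. x (r l)) \<and> (\<lambda>l. al (r l)) \<longlonglongrightarrow> 0 \<longrightarrow>
        (\<lambda>l. psi (x (r l) + al (r l) *\<^sub>R sb (r l)) - psi (x (r l))
              - al (r l) * dirderiv psi (x (r l)) (sb (r l))) \<in> o(\<lambda>l. al (r l)))"

definition polyhedral :: "('a::real_inner \<Rightarrow> real) \<Rightarrow> bool" where
  "polyhedral phi \<longleftrightarrow> (\<exists>A::('a \<times> real) set. finite A \<and> A \<noteq> {} \<and>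
      (\<forall>y. phi y = Max ((\<lambda>(a, b). inner a y + b) ` A)))"

text \<open>Group lasso regularizer: X :: real^'n1^'n2, X $ i is the i-th column X_i.\<close>
definition group_lasso :: "real^'n1^'n2 \<Rightarrow> real" where
  "group_lasso X = (\<Sum>i\<in>UNIV. norm (X $ i))"

text \<open>c/0 := +infinity (used only with c > 0).\<close>
definition ediv :: "real \<Rightarrow> real \<Rightarrow> ereal" where
  "ediv a b = (if b = 0 then \<infinity> else ereal (a / b))"

definition theta :: "real^'n1^'n2 \<Rightarrow> real^'n1^'n2 \<Rightarrow> 'n2 \<Rightarrow> real" where
  "theta X D i = inner (X $ i) (D $ i) / (norm (X $ i) * norm (D $ i))"

definition group_lasso_safeguard ::
  "(real^'n1^'n2 \<Rightarrow> real) \<Rightarrow> real \<Rightarrow> real^'n1^'n2 \<Rightarrow> real^'n1^'n2 \<Rightarrow> ereal" where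
  "group_lasso_safeguard psi \<sigma> X D =
     min (Gmax psi X D)
       (min (INF i\<in>{i. X $ i \<noteq> 0}. ediv (norm (X $ i) powr (1 + \<sigma>)) (1 - (theta X D i)\<^sup>2))
            (INF i\<in>{i. X $ i \<noteq> 0}. ediv (norm (X $ i)) (max (- 2 * theta X D i) 0)))"

end

theory Submission
  imports Defs
begin

(*
  Split psi = f + phi. A locally Lipschitz gradient and the mean value theorem bound the
  remainder of f by a multiple of alpha^2 near the limit of the subsequence, so everything
  hinges on the remainder of the regularizer phi, which the safeguard controls:

  - Polyhedral phi: its slopes along a line form a finite set, so wherever t -> psi(x + t d)
    is C^1 the slope of phi is continuous, hence constant. Below Gamma_max the regularizer is
    therefore affine along the step and its remainder vanishes.

  - Group lasso: zero columns contribute no remainder. For a nonzero column X_i the remainder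
    of the norm lies between 0 and alpha^2 ||D_i||^2 (1 - theta_i^2) / ||X_i||, provided the
    step does not push the column through the origin (third safeguard term). The second
    safeguard term turns this into alpha ||X_i||^sigma, and ||D_i|| <= 1 into alpha^2 / ||X_i||.
    Once alpha <= eps^(1 + 1/sigma) the first bound is at most eps alpha for columns with
    ||X_i|| <= eps^(1/sigma) and the second one for all other columns.
*)

section \<open>Directional derivatives and the smooth part\<close>

lemma dirderiv_eqI:
  "((\<lambda>t. (psi (x + t *\<^sub>R d) - psi x) / t) \<longlongrightarrow> l) (at_right 0) \<Longrightarrow> dirderiv psi x d = l"
  unfolding dirderiv_def by (rule tendsto_Lim) (simp_all add: trivial_limit_at_right_real)

lemma dirderiv_zero: "dirderiv psi x 0 = 0"
  by (rule dirderiv_eqI) simp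

lemma has_derivative_difference_quotient:
  fixes F :: "'a::real_normed_vector \<Rightarrow> real"
  assumes "(F has_derivative F') (at y)"
  shows "((\<lambda>t. (F (y + t *\<^sub>R e) - F y) / t) \<longlongrightarrow> F' e) (at_right 0)"
proof -
  have line: "((\<lambda>t. y + t *\<^sub>R e) has_derivative (\<lambda>h. h *\<^sub>R e)) (at 0)"
    by (auto intro!: derivative_eq_intros)
  have "((\<lambda>t. F (y + t *\<^sub>R e)) has_derivative (\<lambda>h. F' (h *\<^sub>R e))) (at 0)"
    using has_derivative_compose[OF line] assms by (simp add: o_def)
  moreover have "(\<lambda>h. F' (h *\<^sub>R e)) = (*) (F' e)"
    using linear_scale[OF has_derivative_linear[OF assms]] by (auto simp: mult.commute)
  ultimately have "((\<lambda>t. F (y + t *\<^sub>R e)) has_real_derivative F' e) (at 0)"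
    by (simp add: has_field_derivative_def)
  then have "((\<lambda>t. (F (y + t *\<^sub>R e) - F y) / t) \<longlongrightarrow> F' e) (at 0)"
    unfolding has_field_derivative_iff by simp
  then show ?thesis by (rule tendsto_mono[OF at_le, rotated]) simp
qed

lemma C1_grad_line_derivative:
  assumes "C1_grad f G"
  shows "((\<lambda>t. f (y + t *\<^sub>R e)) has_real_derivative inner (G (y + t *\<^sub>R e)) e) (at t within S)"
proof -
  have line: "((\<lambda>t. y + t *\<^sub>R e) has_derivative (\<lambda>h. h *\<^sub>R e)) (at t within S)"
    by (auto intro!: derivative_eq_intros)
  have "(f has_derivative (\<lambda>h. inner (G (y + t *\<^sub>R e)) h)) (at (y + t *\<^sub>R e))"
    using assms unfolding C1_grad_def by blast
  from has_derivative_compose[OF line this]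
  have "((\<lambda>t. f (y + t *\<^sub>R e)) has_derivative (\<lambda>h. h * inner (G (y + t *\<^sub>R e)) e)) (at t within S)"
    by (simp add: o_def)
  then show ?thesis
    by (simp add: has_field_derivative_def mult.commute[of _ "inner (G (y + t *\<^sub>R e)) e"])
qed

lemma dirderiv_add_C1_grad:
  assumes "C1_grad f G"
    and "((\<lambda>t. (phi (y + t *\<^sub>R e) - phi y) / t) \<longlongrightarrow> dirderiv phi y e) (at_right 0)"
  shows "dirderiv (\<lambda>z. f z + phi z) y e = inner (G y) e + dirderiv phi y e"
proof (rule dirderiv_eqI)
  have "(f has_derivative inner (G y)) (at y)"
    using assms(1) unfolding C1_grad_def by blast
  from tendsto_add[OF has_derivative_difference_quotient[OF this] assms(2)]
  show "((\<lambda>t. (f (y + t *\<^sub>R e) + phi (y + t *\<^sub>R e) - (f y + phi y)) / t)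
          \<longlongrightarrow> inner (G y) e + dirderiv phi y e) (at_right 0)"
    by (simp add: add_divide_distrib[symmetric] algebra_simps)
qed

lemma lipschitz_gradient_remainder_bound:
  assumes C1: "C1_grad f G"
    and lip: "\<forall>u\<in>ball y0 \<rho>. \<forall>v\<in>ball y0 \<rho>. dist (G u) (G v) \<le> L * dist u v"
    and y: "dist y0 y < \<rho>/2" and a: "0 < a" "a < \<rho>/2" and e: "norm e \<le> 1"
  shows "\<bar>f (y + a *\<^sub>R e) - f y - a * inner (G y) e\<bar> \<le> \<bar>L\<bar> * a\<^sup>2"
proof -
  obtain z where z: "0 < z" "z < a"
    and mvt: "f (y + a *\<^sub>R e) - f (y + 0 *\<^sub>R e) = (a - 0) * inner (G (y + z *\<^sub>R e)) e"
    using MVT2[OF a(1), of "\<lambda>t. f (y + t *\<^sub>R e)" "\<lambda>t. inner (G (y + t *\<^sub>R e)) e"]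
      C1_grad_line_derivative[OF C1] by blast
  have yz: "dist y (y + z *\<^sub>R e) \<le> z"
    using e z by (simp add: dist_norm mult_left_le)
  have "y \<in> ball y0 \<rho>" "y + z *\<^sub>R e \<in> ball y0 \<rho>"
    using y a z yz dist_triangle[of y0 "y + z *\<^sub>R e" y] by auto
  then have "norm (G (y + z *\<^sub>R e) - G y) \<le> L * dist (y + z *\<^sub>R e) y"
    using lip by (metis dist_norm)
  also have "\<dots> \<le> \<bar>L\<bar> * a"
    using yz z by (intro mult_mono) (auto simp: dist_commute)
  finally have grad: "\<bar>inner (G (y + z *\<^sub>R e) - G y) e\<bar> \<le> \<bar>L\<bar> * a"
    using Cauchy_Schwarz_ineq2[of "G (y + z *\<^sub>R e) - G y" e] e
    by (smt (verit) mult_left_le norm_ge_zero)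
  have "\<bar>f (y + a *\<^sub>R e) - f y - a * inner (G y) e\<bar> = a * \<bar>inner (G (y + z *\<^sub>R e) - G y) e\<bar>"
    using mvt a by (simp add: inner_diff_left) (metis abs_mult abs_of_pos right_diff_distrib)
  also have "\<dots> \<le> a * (\<bar>L\<bar> * a)"
    using grad a by simp
  finally show ?thesis by (simp add: power2_eq_square algebra_simps)
qed

lemma C1_remainder_smallo:
  assumes C1: "C1_grad f G" and LL: "locally_lipschitz G"
    and y: "y \<longlonglongrightarrow> y0" and \<alpha>: "\<alpha> \<longlonglongrightarrow> 0"
    and e: "\<And>l. e l = 0 \<or> (norm (e l) = 1 \<and> 0 < \<alpha> l)"
  shows "(\<lambda>l. f (y l + \<alpha> l *\<^sub>R e l) - f (y l) - \<alpha> l * inner (G (y l)) (e l)) \<in> o(\<alpha>)"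
proof (rule landau_o.smallI)
  fix c :: real assume c: "c > 0"
  obtain \<rho> L where \<rho>: "\<rho> > 0"
    and lip: "\<forall>u\<in>ball y0 \<rho>. \<forall>v\<in>ball y0 \<rho>. dist (G u) (G v) \<le> L * dist u v"
    using LL unfolding locally_lipschitz_def by blast
  have "eventually (\<lambda>l. dist (y l) y0 < \<rho>/2) sequentially"
    using \<rho> by (intro tendstoD[OF y]) simp
  moreover have "eventually (\<lambda>l. dist (\<alpha> l) 0 < min (\<rho>/2) (c / (\<bar>L\<bar> + 1))) sequentially"
    using \<rho> c by (intro tendstoD[OF \<alpha>]) simp
  ultimately show "eventually (\<lambda>l. norm (f (y l + \<alpha> l *\<^sub>R e l) - f (y l) - \<alpha> l * inner (G (y l)) (e l))
      \<le> c * norm (\<alpha> l)) sequentially"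
  proof eventually_elim
    case (elim l)
    show ?case
    proof (cases "e l = 0")
      case False
      then have e1: "norm (e l) = 1" and \<alpha>0: "0 < \<alpha> l" using e[of l] by auto
      have "\<bar>L\<bar> * \<alpha> l \<le> c"
        using elim \<alpha>0 by (simp add: field_simps)
      then have "\<bar>L\<bar> * (\<alpha> l)\<^sup>2 \<le> c * \<alpha> l"
        using \<alpha>0 by (simp add: power2_eq_square mult_right_mono)
      with lipschitz_gradient_remainder_bound[OF C1 lip, of "y l" "\<alpha> l" "e l"] elim e1 \<alpha>0
      show ?thesis by (simp add: dist_commute)
    qed (use c in simp)
  qed
qed

lemma C1_plus_remainder_smallo:
  assumes C1: "C1_grad f G" and LL: "locally_lipschitz G"
    and y: "y \<longlonglongrightarrow> y0" and \<alpha>: "\<alpha> \<longlonglongrightarrow> 0"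
    and e: "\<And>l. e l = 0 \<or> (norm (e l) = 1 \<and> 0 < \<alpha> l)"
    and dd: "\<And>l. e l \<noteq> 0 \<Longrightarrow>
      ((\<lambda>t. (phi (y l + t *\<^sub>R e l) - phi (y l)) / t) \<longlongrightarrow> dirderiv phi (y l) (e l)) (at_right 0)"
    and rem: "(\<lambda>l. phi (y l + \<alpha> l *\<^sub>R e l) - phi (y l) - \<alpha> l * dirderiv phi (y l) (e l)) \<in> o(\<alpha>)"
  shows "(\<lambda>l. (f (y l + \<alpha> l *\<^sub>R e l) + phi (y l + \<alpha> l *\<^sub>R e l)) - (f (y l) + phi (y l))
            - \<alpha> l * dirderiv (\<lambda>z. f z + phi z) (y l) (e l)) \<in> o(\<alpha>)"
proof -
  have "dirderiv (\<lambda>z. f z + phi z) (y l) (e l) = inner (G (y l)) (e l) + dirderiv phi (y l) (e l)" for l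
    using dirderiv_add_C1_grad[OF C1] dd by (cases "e l = 0") (auto simp: dirderiv_zero)
  then show ?thesis
    using sum_in_smallo(1)[OF C1_remainder_smallo[OF C1 LL y \<alpha> e] rem]
    by (simp add: algebra_simps)
qed

lemma TR_run_C1_grad_convex:
  assumes "TR_run f G phi u d Gam S m \<delta> \<kappa> T \<eta> \<eta>1 \<eta>2 r1 r2 \<Delta>max \<gamma>1 \<gamma>2 eps ell x Dl B s aC c al sb"
  shows "C1_grad f G" and "convex_on UNIV phi"
  using assms unfolding TR_run_def Let_def by blast+

lemma unitv_emin_safeguarded:
  assumes pos: "\<forall>y e. norm e = 1 \<longrightarrow> Gam y e > 0"
  shows "unitv v = 0 \<or> (norm (unitv v) = 1 \<and> 0 < emin (Gam y (unitv v)) (norm v)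
           \<and> ereal (emin (Gam y (unitv v)) (norm v)) \<le> Gam y (unitv v))"
proof (cases "v = 0")
  case False
  then have unit: "norm (unitv v) = 1" by (simp add: unitv_def)
  then have "Gam y (unitv v) > 0" using pos by blast
  then show ?thesis
    using unit False by (cases "Gam y (unitv v)") (auto simp: emin_def min_def)
qed (simp add: unitv_def)

lemma TR_run_step_safeguarded:
  assumes TR: "TR_run f G phi u d Gam S m \<delta> \<kappa> T \<eta> \<eta>1 \<eta>2 r1 r2 \<Delta>max \<gamma>1 \<gamma>2 eps ell x Dl B s aC c al sb"
  shows "sb k = 0 \<or> (norm (sb k) = 1 \<and> 0 < al k \<and> ereal (al k) \<le> Gam (x k) (sb k))"
proof -
  have pos: "\<forall>y e. norm e = 1 \<longrightarrow> Gam y e > 0"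
    using TR unfolding TR_run_def Let_def by blast
  have "\<exists>v. sb k = unitv v \<and> al k = emin (Gam (x k) (unitv v)) (norm v)"
    using TR unfolding TR_run_def Let_def if_bool_eq_disj by blast
  then obtain v where "sb k = unitv v" "al k = emin (Gam (x k) (unitv v)) (norm v)"
    by blast
  then show ?thesis
    using unitv_emin_safeguarded[OF pos, of v "x k"] by simp
qed

section \<open>Polyhedral regularizers\<close>

lemma polyhedral_line_slopes_finite:
  assumes "polyhedral phi"
  shows "finite {k. \<exists>t. ((\<lambda>s. phi (y + s *\<^sub>R e)) has_real_derivative k) (at t)}"
proof -
  obtain A where A: "finite A" "A \<noteq> {}" and phi: "\<And>z. phi z = Max ((\<lambda>(a, b). inner a z + b) ` A)"
    using assms unfolding polyhedral_def by blast
  have "k \<in> (\<lambda>p. inner (fst p) e) ` A"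
    if D: "((\<lambda>s. phi (y + s *\<^sub>R e)) has_real_derivative k) (at t)" for k t
  proof -
    have "Max ((\<lambda>(a, b). inner a (y + t *\<^sub>R e) + b) ` A) \<in> (\<lambda>(a, b). inner a (y + t *\<^sub>R e) + b) ` A"
      using A by (intro Max_in) auto
    then obtain p where p: "p \<in> A" and active: "phi (y + t *\<^sub>R e) = inner (fst p) (y + t *\<^sub>R e) + snd p"
      using phi by (auto split: prod.splits)
    have below: "inner (fst p) (y + s *\<^sub>R e) + snd p \<le> phi (y + s *\<^sub>R e)" for s
    proof -
      have "inner (fst p) (y + s *\<^sub>R e) + snd p \<in> (\<lambda>(a, b). inner a (y + s *\<^sub>R e) + b) ` A"
        using p by (force split: prod.splits)
      then show ?thesis using A phi by simp
    qed
    \<comment> \<open>The active affine piece touches \<open>phi\<close> from below at \<open>t\<close>, so the slopes agree.\<close>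
    have "((\<lambda>s. phi (y + s *\<^sub>R e) - (inner (fst p) y + s * inner (fst p) e + snd p))
           has_real_derivative k - inner (fst p) e) (at t)"
      using D by (auto intro!: derivative_eq_intros)
    then have "k - inner (fst p) e = 0"
      by (rule DERIV_local_min[of _ _ _ 1]) (use active below in \<open>auto simp: inner_add_right\<close>)
    then show ?thesis using p by force
  qed
  then have "{k. \<exists>t. ((\<lambda>s. phi (y + s *\<^sub>R e)) has_real_derivative k) (at t)} \<subseteq> (\<lambda>p. inner (fst p) e) ` A"
    by blast
  then show ?thesis using A(1) finite_subset by blast
qed

lemma C1_on_interval_line_diff_C1_grad:
  assumes C1: "C1_grad f G" and "C1_on_interval (\<lambda>t. f (y + t *\<^sub>R e) + phi (y + t *\<^sub>R e)) T"
  shows "C1_on_interval (\<lambda>t. phi (y + t *\<^sub>R e)) T"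
proof -
  obtain h' where h': "\<forall>t\<in>{0<..<T}. ((\<lambda>t. f (y + t *\<^sub>R e) + phi (y + t *\<^sub>R e)) has_real_derivative h' t) (at t)"
    and cont: "continuous_on {0<..<T} h'"
    using assms(2) unfolding C1_on_interval_def by blast
  have "\<forall>t\<in>{0<..<T}. ((\<lambda>s. phi (y + s *\<^sub>R e))
          has_real_derivative h' t - inner (G (y + t *\<^sub>R e)) e) (at t)"
  proof
    fix t assume "t \<in> {0<..<T}"
    then have "((\<lambda>s. (f (y + s *\<^sub>R e) + phi (y + s *\<^sub>R e)) - f (y + s *\<^sub>R e))
          has_real_derivative h' t - inner (G (y + t *\<^sub>R e)) e) (at t)"
      using h' by (intro DERIV_diff C1_grad_line_derivative[OF C1]) auto
    then show "((\<lambda>s. phi (y + s *\<^sub>R e)) has_real_derivative h' t - inner (G (y + t *\<^sub>R e)) e) (at t)"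
      by simp
  qed
  moreover have "continuous_on {0<..<T} (\<lambda>t. h' t - inner (G (y + t *\<^sub>R e)) e)"
    using C1 unfolding C1_grad_def
    by (intro continuous_on_diff cont continuous_on_inner continuous_on_const
        continuous_on_compose2[of UNIV G _ "\<lambda>t. y + t *\<^sub>R e"]) (auto intro!: continuous_intros)
  ultimately show ?thesis
    unfolding C1_on_interval_def by (intro exI[of _ "\<lambda>t. h' t - inner (G (y + t *\<^sub>R e)) e"] conjI)
qed

lemma affine_on_closure:
  fixes h :: "real \<Rightarrow> real"
  assumes "continuous_on (closure A) h" "\<And>t. t \<in> A \<Longrightarrow> h t = b + t * c" "t \<in> closure A"
  shows "h t = b + t * c"
proof -
  have "continuous_on (closure A) (\<lambda>t. h t - t * c)"
    by (intro continuous_intros assms(1))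
  moreover have "h s - s * c = b" if "s \<in> A" for s
    using assms(2)[OF that] by simp
  ultimately have "h t - t * c = b"
    using assms(3) by (rule continuous_constant_on_closure)
  then show ?thesis by simp
qed

lemma polyhedral_affine_on_C1_interval:
  assumes P: "polyhedral phi" and cont: "continuous_on UNIV phi" and T: "0 < T"
    and C1: "C1_on_interval (\<lambda>t. phi (y + t *\<^sub>R e)) T"
  shows "\<exists>c. \<forall>t\<in>{0..<T}. phi (y + t *\<^sub>R e) = phi y + t * c"
proof -
  obtain h' where h': "\<forall>t\<in>{0<..<T}. ((\<lambda>t. phi (y + t *\<^sub>R e)) has_real_derivative h' t) (at t)"
    and h'_cont: "continuous_on {0<..<T} h'"
    using C1 unfolding C1_on_interval_def by blast
  have "finite (h' ` {0<..<T})"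
    using h' by (intro finite_subset[OF _ polyhedral_line_slopes_finite[OF P, of y e]]) auto
  then have "h' constant_on {0<..<T}"
    by (intro continuous_finite_range_constant h'_cont) simp
  then obtain c where c: "\<And>t. t \<in> {0<..<T} \<Longrightarrow> h' t = c"
    unfolding constant_on_def by blast
  have "((\<lambda>s. phi (y + s *\<^sub>R e) - s * c) has_real_derivative 0) (at t within {0<..<T})"
    if "t \<in> {0<..<T}" for t
  proof -
    have "((\<lambda>s. phi (y + s *\<^sub>R e)) has_real_derivative h' t) (at t)"
      using h' that by blast
    from DERIV_diff[OF this DERIV_cmult_right[OF DERIV_ident, of c]] show ?thesis
      using c[OF that] by (simp add: has_field_derivative_at_within)
  qed
  then have "\<exists>b. \<forall>t\<in>{0<..<T}. phi (y + t *\<^sub>R e) - t * c = b"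
    by (intro has_field_derivative_zero_constant) auto
  then obtain b where b: "\<And>t. t \<in> {0<..<T} \<Longrightarrow> phi (y + t *\<^sub>R e) = b + t * c"
    by (auto simp: algebra_simps)
  have line_cont: "continuous_on S (\<lambda>t. phi (y + t *\<^sub>R e))" for S
    by (intro continuous_on_compose2[OF cont]) (auto intro!: continuous_intros)
  have affine: "phi (y + t *\<^sub>R e) = b + t * c" if "t \<in> {0..<T}" for t
  proof (rule affine_on_closure[OF line_cont b])
    show "t \<in> closure {0<..<T}" using that T by simp
  qed
  moreover have "b = phi y"
    using affine[of 0] T by simp
  ultimately show ?thesis
    by blast
qed

lemma affine_difference_quotient_tendsto:
  assumes "0 < T" "\<forall>t\<in>{0..<T}. phi (y + t *\<^sub>R e) = phi y + t * (c::real)"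
  shows "((\<lambda>t. (phi (y + t *\<^sub>R e) - phi y) / t) \<longlongrightarrow> c) (at_right 0)"
proof (rule tendsto_eventually)
  have "eventually (\<lambda>t. t \<in> {0<..<T}) (at_right (0::real))"
    using assms by (intro eventually_at_right_real) simp
  then show "eventually (\<lambda>t. (phi (y + t *\<^sub>R e) - phi y) / t = c) (at_right 0)"
    by eventually_elim (use assms in auto)
qed

lemma polyhedral_exact_below_Gmax:
  assumes C1: "C1_grad f G" and P: "polyhedral phi" and cont: "continuous_on UNIV phi"
    and a: "0 < a" "ereal a \<le> Gmax (\<lambda>z. f z + phi z) y e"
  shows "((\<lambda>t. (phi (y + t *\<^sub>R e) - phi y) / t) \<longlongrightarrow> dirderiv phi y e) (at_right 0)"
    and "phi (y + a *\<^sub>R e) = phi y + a * dirderiv phi y e"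
proof -
  define Ts where "Ts = {T. 0 < T \<and> C1_on_interval (\<lambda>t. f (y + t *\<^sub>R e) + phi (y + t *\<^sub>R e)) T}"
  have Gmax: "Gmax (\<lambda>z. f z + phi z) y e = Sup (ereal ` Ts)"
    unfolding Gmax_def Ts_def by simp
  have affine: "\<forall>t\<in>{0..<T}. phi (y + t *\<^sub>R e) = phi y + t * dirderiv phi y e" if "T \<in> Ts" for T
  proof -
    have T: "0 < T" using that by (simp add: Ts_def)
    have "C1_on_interval (\<lambda>t. phi (y + t *\<^sub>R e)) T"
      using that C1_on_interval_line_diff_C1_grad[OF C1] by (simp add: Ts_def)
    then obtain c where c: "\<forall>t\<in>{0..<T}. phi (y + t *\<^sub>R e) = phi y + t * c"
      using polyhedral_affine_on_C1_interval[OF P cont T] by blast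
    moreover have "dirderiv phi y e = c"
      by (rule dirderiv_eqI[OF affine_difference_quotient_tendsto[OF T c]])
    ultimately show ?thesis by simp
  qed
  have below_Gmax: "\<exists>T\<in>Ts. t < T" if "t < a" for t
  proof -
    have "ereal t < Sup (ereal ` Ts)"
      using that a(2) Gmax by (metis ereal_less(3) less_ereal.simps(1) order_less_le_trans)
    then show ?thesis by (auto simp: less_Sup_iff)
  qed
  then obtain T0 where T0: "T0 \<in> Ts" using a(1) by blast
  then have "0 < T0" by (simp add: Ts_def)
  then show "((\<lambda>t. (phi (y + t *\<^sub>R e) - phi y) / t) \<longlongrightarrow> dirderiv phi y e) (at_right 0)"
    by (rule affine_difference_quotient_tendsto[OF _ affine[OF T0]])
  have affine_below_a: "phi (y + t *\<^sub>R e) = phi y + t * dirderiv phi y e" if t: "t \<in> {0..<a}" for t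
  proof -
    obtain T where "T \<in> Ts" "t < T" using below_Gmax t by auto
    with affine t show ?thesis by auto
  qed
  have "continuous_on (closure {0..<a}) (\<lambda>t. phi (y + t *\<^sub>R e))"
    by (intro continuous_on_compose2[OF cont]) (auto intro!: continuous_intros)
  then show "phi (y + a *\<^sub>R e) = phi y + a * dirderiv phi y e"
    by (rule affine_on_closure[OF _ affine_below_a]) (use a(1) in auto)
qed

lemma polyhedral_accuracy:
  fixes f phi :: "'a::euclidean_space \<Rightarrow> real"
  assumes TR: "TR_run f G phi u d Gam S m \<delta> \<kappa> T \<eta> \<eta>1 \<eta>2 r1 r2 \<Delta>max \<gamma>1 \<gamma>2 eps ell x Dl B s aC c al sb"
    and LL: "locally_lipschitz G" and P: "polyhedral phi"
    and Gam: "\<forall>y e. norm e = 1 \<longrightarrow> Gam y e \<le> Gmax (\<lambda>z. f z + phi z) y e"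
  shows "accuracy_B3 (\<lambda>z. f z + phi z) x al sb"
  unfolding accuracy_B3_def
proof (intro allI impI, elim conjE)
  fix r :: "nat \<Rightarrow> nat"
  assume "convergent (\<lambda>l. x (r l))" and \<alpha>: "(\<lambda>l. al (r l)) \<longlonglongrightarrow> 0"
  then obtain y0 where y: "(\<lambda>l. x (r l)) \<longlonglongrightarrow> y0" unfolding convergent_def by blast
  note C1 = TR_run_C1_grad_convex(1)[OF TR]
  have cont: "continuous_on UNIV phi"
    using convex_on_continuous[OF open_UNIV TR_run_C1_grad_convex(2)[OF TR]] .
  have step: "sb (r l) = 0 \<or> (norm (sb (r l)) = 1 \<and> 0 < al (r l) \<and>
      ereal (al (r l)) \<le> Gmax (\<lambda>z. f z + phi z) (x (r l)) (sb (r l)))" for l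
    using TR_run_step_safeguarded[OF TR, of "r l"] Gam by (auto intro: order_trans)
  have e: "sb (r l) = 0 \<or> (norm (sb (r l)) = 1 \<and> 0 < al (r l))" for l
    using step[of l] by blast
  have dd: "((\<lambda>t. (phi (x (r l) + t *\<^sub>R sb (r l)) - phi (x (r l))) / t)
      \<longlongrightarrow> dirderiv phi (x (r l)) (sb (r l))) (at_right 0)" if "sb (r l) \<noteq> 0" for l
    using that step[of l] polyhedral_exact_below_Gmax(1)[OF C1 P cont] by blast
  \<comment> \<open>Below the safeguard \<open>phi\<close> is affine along the step, so its remainder vanishes.\<close>
  have "phi (x (r l) + al (r l) *\<^sub>R sb (r l)) - phi (x (r l)) - al (r l) * dirderiv phi (x (r l)) (sb (r l)) = 0"
    for l
  proof (cases "sb (r l) = 0")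
    case False
    then show ?thesis
      using step[of l] polyhedral_exact_below_Gmax(2)[OF C1 P cont] by simp
  qed (simp add: dirderiv_zero)
  then have rem: "(\<lambda>l. phi (x (r l) + al (r l) *\<^sub>R sb (r l)) - phi (x (r l))
      - al (r l) * dirderiv phi (x (r l)) (sb (r l))) \<in> o(\<lambda>l. al (r l))"
    by simp
  show "(\<lambda>l. f (x (r l) + al (r l) *\<^sub>R sb (r l)) + phi (x (r l) + al (r l) *\<^sub>R sb (r l))
      - (f (x (r l)) + phi (x (r l))) - al (r l) * dirderiv (\<lambda>z. f z + phi z) (x (r l)) (sb (r l)))
      \<in> o(\<lambda>l. al (r l))"
    by (rule C1_plus_remainder_smallo[OF C1 LL y \<alpha> e dd rem])
qed

section \<open>Group lasso\<close>

lemma norm_linearization_bounds: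
  fixes x v :: "'a::real_inner"
  assumes x: "x \<noteq> 0" and half: "- norm x / 2 \<le> t * inner x v / norm x"
  shows "0 \<le> norm (x + t *\<^sub>R v) - norm x - t * inner x v / norm x"
    and "norm (x + t *\<^sub>R v) - norm x - t * inner x v / norm x
           \<le> t\<^sup>2 * ((norm x)\<^sup>2 * (norm v)\<^sup>2 - (inner x v)\<^sup>2) / (norm x)^3"
proof -
  define S L where "S = norm (x + t *\<^sub>R v)" and "L = norm x + t * inner x v / norm x"
  have a: "norm x > 0" using x by simp
  have "S\<^sup>2 = (norm x)\<^sup>2 + 2 * t * inner x v + t\<^sup>2 * (norm v)\<^sup>2"
    unfolding S_def power2_norm_eq_inner
    by (simp add: inner_add_left inner_add_right inner_commute algebra_simps power2_eq_square)
  then have diff: "S\<^sup>2 - L\<^sup>2 = t\<^sup>2 * ((norm x)\<^sup>2 * (norm v)\<^sup>2 - (inner x v)\<^sup>2) / (norm x)\<^sup>2"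
    using a unfolding L_def by (simp add: field_simps power2_eq_square)
  have "(inner x v)\<^sup>2 \<le> (norm x)\<^sup>2 * (norm v)\<^sup>2"
    using Cauchy_Schwarz_ineq[of x v] by (simp add: power2_norm_eq_inner)
  then have "0 \<le> t\<^sup>2 * ((norm x)\<^sup>2 * (norm v)\<^sup>2 - (inner x v)\<^sup>2) / (norm x)\<^sup>2"
    by simp
  then have "L\<^sup>2 \<le> S\<^sup>2" using diff by linarith
  moreover have L: "norm x / 2 \<le> L" using half unfolding L_def by linarith
  ultimately have "L \<le> S" using a S_def by (smt (verit) power2_le_imp_le norm_ge_zero)
  then show "0 \<le> norm (x + t *\<^sub>R v) - norm x - t * inner x v / norm x"
    by (simp add: S_def L_def)
  have "norm x \<le> S + L" using \<open>L \<le> S\<close> L by simp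
  then have "0 < S + L" using a by linarith
  then have "S - L = (S\<^sup>2 - L\<^sup>2) / (S + L)"
    by (simp add: field_simps power2_eq_square)
  also have "\<dots> \<le> (S\<^sup>2 - L\<^sup>2) / norm x"
    using \<open>L\<^sup>2 \<le> S\<^sup>2\<close> \<open>0 < S + L\<close> a
    by (intro divide_left_mono[OF \<open>norm x \<le> S + L\<close>]) (simp_all add: zero_less_mult_iff)
  also have "\<dots> = t\<^sup>2 * ((norm x)\<^sup>2 * (norm v)\<^sup>2 - (inner x v)\<^sup>2) / (norm x)^3"
    using a unfolding diff by (simp add: field_simps power2_eq_square power3_eq_cube)
  finally show "norm (x + t *\<^sub>R v) - norm x - t * inner x v / norm x
           \<le> t\<^sup>2 * ((norm x)\<^sup>2 * (norm v)\<^sup>2 - (inner x v)\<^sup>2) / (norm x)^3"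
    by (simp add: S_def L_def)
qed

definition norm_dderiv :: "'a::real_inner \<Rightarrow> 'a \<Rightarrow> real" where
  "norm_dderiv x v = (if x = 0 then norm v else inner x v / norm x)"

lemma norm_dderiv_difference_quotient:
  "((\<lambda>t. (norm (x + t *\<^sub>R v) - norm x) / t) \<longlongrightarrow> norm_dderiv x v) (at_right 0)"
proof (cases "x = 0")
  case True
  have "eventually (\<lambda>t. (norm (x + t *\<^sub>R v) - norm x) / t = norm v) (at_right (0::real))"
    using eventually_at_right_less[of 0] by eventually_elim (use True in simp)
  then show ?thesis
    using True by (simp add: norm_dderiv_def tendsto_eventually)
next
  case False
  from has_derivative_difference_quotient[OF has_derivative_norm[OF False], of v]
  show ?thesis
    using False by (simp add: norm_dderiv_def sgn_div_norm inner_commute divide_inverse_commute)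
qed

lemma group_lasso_difference_quotient:
  fixes X D :: "real^'n1^'n2"
  shows "((\<lambda>t. (group_lasso (X + t *\<^sub>R D) - group_lasso X) / t)
           \<longlongrightarrow> (\<Sum>i\<in>UNIV. norm_dderiv (X $ i) (D $ i))) (at_right 0)"
proof -
  have "(\<lambda>t. (group_lasso (X + t *\<^sub>R D) - group_lasso X) / t)
      = (\<lambda>t. \<Sum>i\<in>UNIV. (norm (X $ i + t *\<^sub>R D $ i) - norm (X $ i)) / t)"
    by (simp add: group_lasso_def sum_divide_distrib[symmetric] sum_subtractf)
  then show ?thesis
    by (simp add: tendsto_sum norm_dderiv_difference_quotient)
qed

lemma dirderiv_group_lasso:
  "dirderiv group_lasso X D = (\<Sum>i\<in>UNIV. norm_dderiv (X $ i) (D $ i))"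
  by (rule dirderiv_eqI[OF group_lasso_difference_quotient])

lemma cosine_square_le_1:
  fixes x v :: "'a::real_inner"
  shows "(inner x v / (norm x * norm v))\<^sup>2 \<le> 1"
proof (cases "x = 0 \<or> v = 0")
  case False
  have "\<bar>inner x v\<bar> \<le> norm x * norm v" by (rule Cauchy_Schwarz_ineq2)
  then show ?thesis
    using False by (simp add: abs_square_le_1 abs_divide abs_mult divide_le_eq_1)
qed auto

lemma norm_remainder_safeguarded:
  fixes x v :: "'a::real_inner"
  defines "\<theta> \<equiv> inner x v / (norm x * norm v)"
  assumes x: "x \<noteq> 0" and v: "norm v \<le> 1" and \<alpha>: "0 < \<alpha>"
    and curvature: "\<alpha> * (1 - \<theta>\<^sup>2) \<le> norm x powr (1 + \<sigma>)"
    and crossing: "\<alpha> * max (- 2 * \<theta>) 0 \<le> norm x"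
  shows "0 \<le> norm (x + \<alpha> *\<^sub>R v) - norm x - \<alpha> * inner x v / norm x"
    and "norm (x + \<alpha> *\<^sub>R v) - norm x - \<alpha> * inner x v / norm x \<le> \<alpha> * norm x powr \<sigma>"
    and "norm (x + \<alpha> *\<^sub>R v) - norm x - \<alpha> * inner x v / norm x \<le> \<alpha>\<^sup>2 / norm x"
proof -
  have a: "0 < norm x" using x by simp
  have p: "inner x v = \<theta> * norm x * norm v"
    using x unfolding \<theta>_def by (cases "v = 0") auto
  have "\<theta>\<^sup>2 \<le> 1"
    unfolding \<theta>_def by (rule cosine_square_le_1)
  have "- norm x / 2 \<le> \<alpha> * inner x v / norm x"
  proof (cases "\<theta> < 0")
    case True
    then have "- norm x / 2 \<le> \<alpha> * \<theta>" using crossing by simp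
    also have "\<dots> \<le> \<alpha> * \<theta> * norm v"
      using v mult_pos_neg[OF \<alpha> True] by (simp add: mult_le_cancel_left1)
    finally show ?thesis using a by (simp add: p)
  next
    case False
    then have "0 \<le> \<alpha> * inner x v / norm x"
      using \<alpha> by (simp add: p)
    moreover have "0 \<le> norm x / 2" by simp
    ultimately show ?thesis by linarith
  qed
  note bounds = norm_linearization_bounds[OF x this]
  define k where "k = (norm v)\<^sup>2 * (1 - \<theta>\<^sup>2)"
  have k: "0 \<le> k" "k \<le> 1"
    using \<open>\<theta>\<^sup>2 \<le> 1\<close> v unfolding k_def by (auto intro!: mult_le_one power_le_one)
  have "\<alpha> * k \<le> norm x powr (1 + \<sigma>)"
    using curvature \<open>\<theta>\<^sup>2 \<le> 1\<close> v \<alpha> unfolding k_def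
    by (smt (verit) mult_left_le power_le_one norm_ge_zero mult.assoc mult.commute mult_nonneg_nonneg)
  have remainder: "\<alpha>\<^sup>2 * ((norm x)\<^sup>2 * (norm v)\<^sup>2 - (inner x v)\<^sup>2) / (norm x)^3 = \<alpha> * (\<alpha> * k) / norm x"
    using a unfolding k_def p by (simp add: field_simps power2_eq_square power3_eq_cube)
  show "0 \<le> norm (x + \<alpha> *\<^sub>R v) - norm x - \<alpha> * inner x v / norm x"
    by (rule bounds(1))
  have "\<alpha> * (\<alpha> * k) / norm x \<le> \<alpha> * norm x powr (1 + \<sigma>) / norm x"
    using \<open>\<alpha> * k \<le> norm x powr (1 + \<sigma>)\<close> \<alpha> a by (simp add: divide_right_mono)
  also have "\<dots> = \<alpha> * norm x powr \<sigma>"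
    using a by (simp add: powr_add)
  finally show "norm (x + \<alpha> *\<^sub>R v) - norm x - \<alpha> * inner x v / norm x \<le> \<alpha> * norm x powr \<sigma>"
    using bounds(2) remainder by simp
  have "\<alpha> * (\<alpha> * k) / norm x \<le> \<alpha>\<^sup>2 / norm x"
    using k \<alpha> a by (simp add: divide_right_mono power2_eq_square mult_left_le)
  then show "norm (x + \<alpha> *\<^sub>R v) - norm x - \<alpha> * inner x v / norm x \<le> \<alpha>\<^sup>2 / norm x"
    using bounds(2) remainder by simp
qed

lemma ereal_le_ediv_imp_mult_le:
  assumes "ereal \<alpha> \<le> ediv c m" "0 \<le> m" "0 \<le> c"
  shows "\<alpha> * m \<le> c"
proof (cases "m = 0")
  case False
  then have "\<alpha> \<le> c / m" using assms(1) by (simp add: ediv_def)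
  then show ?thesis using False assms(2) by (simp add: field_simps)
qed (use assms in simp)

lemma le_eps_mult_of_powr_and_square_bound:
  fixes a \<alpha> \<sigma> \<epsilon> E :: real
  assumes "0 < a" "0 < \<alpha>" "0 < \<sigma>" "0 < \<epsilon>" "\<alpha> \<le> \<epsilon> * \<epsilon> powr (1/\<sigma>)"
    and "E \<le> \<alpha> * a powr \<sigma>" "E \<le> \<alpha>\<^sup>2 / a"
  shows "E \<le> \<epsilon> * \<alpha>"
proof (cases "a \<le> \<epsilon> powr (1/\<sigma>)")
  case True
  have "a powr \<sigma> \<le> (\<epsilon> powr (1/\<sigma>)) powr \<sigma>"
    using True assms by (intro powr_mono2) auto
  also have "\<dots> = \<epsilon>" using assms by (simp add: powr_powr)
  finally have "\<alpha> * a powr \<sigma> \<le> \<alpha> * \<epsilon>" using assms(2) by simp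
  then show ?thesis using assms(6) by (simp add: mult.commute)
next
  case False
  then have "\<alpha>\<^sup>2 / a \<le> \<alpha>\<^sup>2 / \<epsilon> powr (1/\<sigma>)"
    using assms(1,4) by (intro divide_left_mono) auto
  also have "\<dots> = \<alpha> * (\<alpha> / \<epsilon> powr (1/\<sigma>))" by (simp add: power2_eq_square)
  also have "\<dots> \<le> \<alpha> * \<epsilon>"
    using assms by (intro mult_left_mono) (auto simp: divide_le_eq)
  finally show ?thesis using assms(7) by (simp add: mult.commute)
qed

lemma group_lasso_column_remainder_le:
  fixes X D :: "real^'n1^'n2"
  assumes D: "norm D = 1" and \<alpha>: "0 < \<alpha>" and \<sigma>: "0 < \<sigma>" and \<epsilon>: "0 < \<epsilon>"
    and small: "\<alpha> \<le> \<epsilon> * \<epsilon> powr (1/\<sigma>)"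
    and safeguard: "ereal \<alpha> \<le> group_lasso_safeguard psi \<sigma> X D"
  shows "0 \<le> norm (X $ i + \<alpha> *\<^sub>R D $ i) - norm (X $ i) - \<alpha> * norm_dderiv (X $ i) (D $ i)"
    and "norm (X $ i + \<alpha> *\<^sub>R D $ i) - norm (X $ i) - \<alpha> * norm_dderiv (X $ i) (D $ i) \<le> \<epsilon> * \<alpha>"
proof -
  have "norm (X $ i + \<alpha> *\<^sub>R D $ i) - norm (X $ i) - \<alpha> * norm_dderiv (X $ i) (D $ i) \<in> {0 .. \<epsilon> * \<alpha>}"
  proof (cases "X $ i = 0")
    case True
    then show ?thesis using \<alpha> \<epsilon> by (simp add: norm_dderiv_def)
  next
    case False
    have "norm (D $ i) \<le> norm D" by (rule Finite_Cartesian_Product.norm_nth_le)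
    then have v: "norm (D $ i) \<le> 1" using D by simp
    have "ereal \<alpha> \<le> ediv (norm (X $ i) powr (1 + \<sigma>)) (1 - (theta X D i)\<^sup>2)"
      and "ereal \<alpha> \<le> ediv (norm (X $ i)) (max (- 2 * theta X D i) 0)"
      using safeguard False unfolding group_lasso_safeguard_def by (auto simp: le_INF_iff)
    then have "\<alpha> * (1 - (theta X D i)\<^sup>2) \<le> norm (X $ i) powr (1 + \<sigma>)"
      and "\<alpha> * max (- 2 * theta X D i) 0 \<le> norm (X $ i)"
      using cosine_square_le_1[of "X $ i" "D $ i"]
      by (auto intro!: ereal_le_ediv_imp_mult_le simp: theta_def)
    from norm_remainder_safeguarded[OF False v \<alpha>, of \<sigma>, folded theta_def, OF this]
    show ?thesis
      using le_eps_mult_of_powr_and_square_bound[of "norm (X $ i)" \<alpha> \<sigma> \<epsilon>] False \<alpha> \<sigma> \<epsilon> small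
      by (simp add: norm_dderiv_def)
  qed
  then show "0 \<le> norm (X $ i + \<alpha> *\<^sub>R D $ i) - norm (X $ i) - \<alpha> * norm_dderiv (X $ i) (D $ i)"
    and "norm (X $ i + \<alpha> *\<^sub>R D $ i) - norm (X $ i) - \<alpha> * norm_dderiv (X $ i) (D $ i) \<le> \<epsilon> * \<alpha>"
    by simp_all
qed

lemma group_lasso_remainder_smallo:
  fixes y e :: "nat \<Rightarrow> real^'n1^'n2"
  assumes \<sigma>: "0 < \<sigma>" and \<alpha>: "\<alpha> \<longlonglongrightarrow> 0"
    and e: "\<And>l. e l = 0 \<or>
      (norm (e l) = 1 \<and> 0 < \<alpha> l \<and> ereal (\<alpha> l) \<le> group_lasso_safeguard psi \<sigma> (y l) (e l))"
  shows "(\<lambda>l. group_lasso (y l + \<alpha> l *\<^sub>R e l) - group_lasso (y l)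
            - \<alpha> l * dirderiv group_lasso (y l) (e l)) \<in> o(\<alpha>)"
proof (rule landau_o.smallI)
  fix c :: real assume c: "0 < c"
  define \<epsilon> where "\<epsilon> = c / CARD('n2)"
  have \<epsilon>: "0 < \<epsilon>" using c by (simp add: \<epsilon>_def)
  have "eventually (\<lambda>l. dist (\<alpha> l) 0 < \<epsilon> * \<epsilon> powr (1/\<sigma>)) sequentially"
    using \<epsilon> by (intro tendstoD[OF \<alpha>]) simp
  then show "eventually (\<lambda>l. norm (group_lasso (y l + \<alpha> l *\<^sub>R e l) - group_lasso (y l)
      - \<alpha> l * dirderiv group_lasso (y l) (e l)) \<le> c * norm (\<alpha> l)) sequentially"
  proof eventually_elim
    case (elim l)
    show ?case
    proof (cases "e l = 0")
      case False
      then have e1: "norm (e l) = 1" and \<alpha>0: "0 < \<alpha> l"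
        and safeguard: "ereal (\<alpha> l) \<le> group_lasso_safeguard psi \<sigma> (y l) (e l)"
        using e[of l] by auto
      have small: "\<alpha> l \<le> \<epsilon> * \<epsilon> powr (1/\<sigma>)" using elim \<alpha>0 by simp
      define E where "E i = norm (y l $ i + \<alpha> l *\<^sub>R e l $ i) - norm (y l $ i)
        - \<alpha> l * norm_dderiv (y l $ i) (e l $ i)" for i
      note column = group_lasso_column_remainder_le[OF e1 \<alpha>0 \<sigma> \<epsilon> small safeguard]
      have "group_lasso (y l + \<alpha> l *\<^sub>R e l) - group_lasso (y l) - \<alpha> l * dirderiv group_lasso (y l) (e l)
          = (\<Sum>i\<in>UNIV. E i)"
        by (simp add: E_def group_lasso_def dirderiv_group_lasso sum_subtractf sum_distrib_left)
      moreover have "0 \<le> (\<Sum>i\<in>UNIV. E i)"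
        using column(1) by (simp add: E_def sum_nonneg)
      moreover have "(\<Sum>i\<in>UNIV. E i) \<le> (\<Sum>i\<in>(UNIV::'n2 set). \<epsilon> * \<alpha> l)"
        using column(2) by (intro sum_mono) (simp add: E_def)
      moreover have "(\<Sum>i\<in>(UNIV::'n2 set). \<epsilon> * \<alpha> l) = c * \<alpha> l"
        by (simp add: \<epsilon>_def)
      ultimately show ?thesis using \<alpha>0 by (simp del: sum_constant)
    qed (use c in \<open>simp add: dirderiv_zero\<close>)
  qed
qed

lemma group_lasso_accuracy:
  fixes f :: "real^'n1^'n2 \<Rightarrow> real"
  assumes TR: "TR_run f G group_lasso u d Gam S m \<delta> \<kappa> T \<eta> \<eta>1 \<eta>2 r1 r2 \<Delta>max \<gamma>1 \<gamma>2 eps ell x Dl B s aC c al sb"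
    and LL: "locally_lipschitz G" and \<sigma>: "0 < \<sigma>"
    and Gam: "\<forall>X D. norm D = 1 \<longrightarrow> Gam X D = group_lasso_safeguard (\<lambda>z. f z + group_lasso z) \<sigma> X D"
  shows "accuracy_B3 (\<lambda>z. f z + group_lasso z) x al sb"
  unfolding accuracy_B3_def
proof (intro allI impI, elim conjE)
  fix r :: "nat \<Rightarrow> nat"
  assume "convergent (\<lambda>l. x (r l))" and \<alpha>: "(\<lambda>l. al (r l)) \<longlonglongrightarrow> 0"
  then obtain y0 where y: "(\<lambda>l. x (r l)) \<longlonglongrightarrow> y0" unfolding convergent_def by blast
  note C1 = TR_run_C1_grad_convex(1)[OF TR]
  have step: "sb (r l) = 0 \<or> (norm (sb (r l)) = 1 \<and> 0 < al (r l) \<and>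
      ereal (al (r l)) \<le> group_lasso_safeguard (\<lambda>z. f z + group_lasso z) \<sigma> (x (r l)) (sb (r l)))" for l
    using TR_run_step_safeguarded[OF TR, of "r l"] Gam by auto
  then have e: "sb (r l) = 0 \<or> (norm (sb (r l)) = 1 \<and> 0 < al (r l))" for l
    by blast
  have dd: "((\<lambda>t. (group_lasso (x (r l) + t *\<^sub>R sb (r l)) - group_lasso (x (r l))) / t)
      \<longlongrightarrow> dirderiv group_lasso (x (r l)) (sb (r l))) (at_right 0)" for l
    by (simp add: dirderiv_group_lasso group_lasso_difference_quotient)
  show "(\<lambda>l. f (x (r l) + al (r l) *\<^sub>R sb (r l)) + group_lasso (x (r l) + al (r l) *\<^sub>R sb (r l))
      - (f (x (r l)) + group_lasso (x (r l)))
      - al (r l) * dirderiv (\<lambda>z. f z + group_lasso z) (x (r l)) (sb (r l))) \<in> o(\<lambda>l. al (r l))"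
    by (rule C1_plus_remainder_smallo[OF C1 LL y \<alpha> e dd group_lasso_remainder_smallo[OF \<sigma> \<alpha> step]])
qed

theorem lemma4p4:
  shows
  "(\<forall>(f::'a::euclidean_space \<Rightarrow> real) G phi u d Gam S m \<delta> \<kappa> T \<eta> \<eta>1 \<eta>2 r1 r2 \<Delta>max \<gamma>1 \<gamma>2 eps ell
       x Dl B s aC c al sb.
       TR_run f G phi u d Gam S m \<delta> \<kappa> T \<eta> \<eta>1 \<eta>2 r1 r2 \<Delta>max \<gamma>1 \<gamma>2 eps ell x Dl B s aC c al sb \<and>
       locally_lipschitz G \<and> bounded (range x) \<and>
       polyhedral phi \<and>
       (\<forall>y e. norm e = 1 \<longrightarrow> Gam y e \<le> Gmax (\<lambda>z. f z + phi z) y e)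
     \<longrightarrow> accuracy_B3 (\<lambda>z. f z + phi z) x al sb)
   \<and>
   (\<forall>(f::real^'n1^'n2 \<Rightarrow> real) G u d Gam S m \<delta> \<kappa> T \<eta> \<eta>1 \<eta>2 r1 r2 \<Delta>max \<gamma>1 \<gamma>2 eps ell
       x Dl B s aC c al sb \<sigma>.
       TR_run f G group_lasso u d Gam S m \<delta> \<kappa> T \<eta> \<eta>1 \<eta>2 r1 r2 \<Delta>max \<gamma>1 \<gamma>2 eps ell x Dl B s aC c al sb \<and>
       locally_lipschitz G \<and> bounded (range x) \<and>
       \<sigma> > 0 \<and>
       (\<forall>X D. norm D = 1 \<longrightarrow>
          Gam X D = group_lasso_safeguard (\<lambda>z. f z + group_lasso z) \<sigma> X D)
     \<longrightarrow> accuracy_B3 (\<lambda>z. f z + group_lasso z) x al sb)"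
  by (auto intro: polyhedral_accuracy group_lasso_accuracy)

end
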